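(* Let $M$ be a smooth manifold, let $\nabla$ be an affine connection on $M$ and let $(\hat J_1,\hat J_2,\hat J)$ be a generalized quaternionic structure on $M$. Then the canonical connection of $(\hat J_1,\hat J_2,\nabla)$ is the generalized Obata connection.
   Context: $E:=TM\oplus T^*M$. The $\nabla$-bracket: $[X+\eta,Y+\beta]_\nabla:=[X,Y]+\nabla_X\beta-\nabla_Y\eta$. $N^\nabla_{\hat K}(\sigma,\tau):=[\hat K\sigma,\hat K\tau]_\nabla-\hat K[\hat K\sigma,\tau]_\nabla-\hat K[\sigma,\hat K\tau]_\nabla+\hat K^2[\sigma,\tau]_\nabla$; $\hat K$ is $\nabla$-integrable if this vanishes. A generalized quaternionic structure is a triple of endomorphisms $\hat J_1,\hat J_2,\hat J=\hat J_1\hat J_2$ of $E$ with $\hat J_1^2=\hat J_2^2=-I$, $\hat J_1\hat J_2=-\hat J_2\hat J_1$, all three $\nabla$-integrable. A generalized affine connection is an $\mathbb R$-bilinear $D$ on sections of $E$ with $D_{f\sigma}\tau=fD_\sigma\tau$, $D_\sigma(f\tau)=X(f)\tau+fD_\sigma\tau$ for $\sigma=X+\eta$. The canonical connection of $(\hat J_1,\hat J_2,\nabla)$ is the unique generalized affine connection $D$ with $D\hat J_1=D\hat J_2=D\hat J=0$ and $D_\sigma\tau-D_\tau\sigma-[\sigma,\tau]_\nabla=0$ (complex-linear extensions) for all sections $\sigma$ of $V_1=\{\sigma-\sqrt{-1}\hat J_1\sigma\}$ and $\tau$ of $V_2=\{\sigma+\sqrt{-1}\hat J_1\sigma\}$ in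 $E\otimes\mathbb C$. Writing $\hat J_3:=\hat J$, the generalized Obata connection is $D_\sigma\tau=\frac1{12}\Big\{\sum_{(\alpha,\beta,\gamma)}\hat J_\alpha([\hat J_\beta\sigma,\hat J_\gamma\tau]_\nabla+[\hat J_\beta\tau,\hat J_\gamma\sigma]_\nabla)+2\sum_{\alpha=1}^3\hat J_\alpha([\hat J_\alpha\sigma,\tau]_\nabla+[\hat J_\alpha\tau,\sigma]_\nabla)-\sum_{\alpha=1}^3N^\nabla_{\hat J_\alpha}(\sigma,\tau)\Big\}+\frac12[\sigma,\tau]_\nabla$, where $(\alpha,\beta,\gamma)$ runs over the cyclic permutations of $(1,2,3)$. *)

theory Defs
  imports "HOL-Analysis.Analysis"
begin

text \<open>C-infinity on an open set S: differentiable, and every directional derivative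
  is again C-infinity (greatest fixed point = differentiable to all orders).\<close>
coinductive cinf_on :: "'a::euclidean_space set \<Rightarrow> ('a \<Rightarrow> real) \<Rightarrow> bool" where
  "f differentiable_on S \<Longrightarrow> (\<forall>v. cinf_on S (\<lambda>x. frechet_derivative f (at x) v))
    \<Longrightarrow> cinf_on S f"

section \<open>Smooth manifolds (the type 'm is the underlying point set)\<close>

definition atlas_open :: "('m set \<times> ('m \<Rightarrow> 'e::euclidean_space)) set \<Rightarrow> 'm set \<Rightarrow> bool" where
  "atlas_open A W \<longleftrightarrow> (\<forall>(U,\<phi>)\<in>A. open (\<phi> ` (W \<inter> U)))"

definition smooth_manifold :: "('m set \<times> ('m \<Rightarrow> 'e::euclidean_space)) set \<Rightarrow> bool" where
  "smooth_manifold A \<longleftrightarrow>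
     (\<Union>(U,\<phi>)\<in>A. U) = UNIV \<and>
     (\<forall>(U,\<phi>)\<in>A. inj_on \<phi> U) \<and>
     (\<forall>(U,\<phi>)\<in>A. \<forall>(V,\<psi>)\<in>A. open (\<phi> ` (U \<inter> V)) \<and>
        (\<forall>i\<in>Basis. cinf_on (\<phi> ` (U \<inter> V)) (\<lambda>x. \<psi> (inv_into U \<phi> x) \<bullet> i))) \<and>
     (\<forall>p q. p \<noteq> q \<longrightarrow> (\<exists>W1 W2. atlas_open A W1 \<and> atlas_open A W2 \<and>
        p \<in> W1 \<and> q \<in> W2 \<and> W1 \<inter> W2 = {})) \<and>
     (\<exists>B. countable B \<and> (\<forall>W\<in>B. atlas_open A W) \<and>
        (\<forall>W. atlas_open A W \<longrightarrow> (\<exists>B'\<subseteq>B. W = \<Union>B')))"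

definition smooth_fns :: "('m set \<times> ('m \<Rightarrow> 'e::euclidean_space)) set \<Rightarrow> ('m \<Rightarrow> real) set" where
  "smooth_fns A = {f. \<forall>(U,\<phi>)\<in>A. cinf_on (\<phi> ` U) (f \<circ> inv_into U \<phi>)}"

section \<open>Vector fields (derivations of C-infinity(M)), 1-forms, sections of TM + T*M\<close>

type_synonym 'm fn = "'m \<Rightarrow> real"
type_synonym 'm vf = "'m fn \<Rightarrow> 'm fn"
type_synonym 'm form = "'m vf \<Rightarrow> 'm fn"
type_synonym 'm sec = "'m vf \<times> 'm form"

definition vector_fields :: "('m set \<times> ('m \<Rightarrow> 'e::euclidean_space)) set \<Rightarrow> 'm vf set" where
  "vector_fields A = {X.
     (\<forall>f\<in>smooth_fns A. X f \<in> smooth_fns A) \<and>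
     (\<forall>f\<in>smooth_fns A. \<forall>g\<in>smooth_fns A.
        X (\<lambda>p. f p + g p) = (\<lambda>p. X f p + X g p) \<and>
        X (\<lambda>p. f p * g p) = (\<lambda>p. f p * X g p + g p * X f p)) \<and>
     (\<forall>c. \<forall>f\<in>smooth_fns A. X (\<lambda>p. c * f p) = (\<lambda>p. c * X f p)) \<and>
     (\<forall>f. f \<notin> smooth_fns A \<longrightarrow> X f = (\<lambda>p. 0))}"

definition vf_add :: "'m vf \<Rightarrow> 'm vf \<Rightarrow> 'm vf" where
  "vf_add X Y = (\<lambda>g p. X g p + Y g p)"

definition vf_smul :: "'m fn \<Rightarrow> 'm vf \<Rightarrow> 'm vf" where
  "vf_smul f X = (\<lambda>g p. f p * X g p)"

definition lie :: "'m vf \<Rightarrow> 'm vf \<Rightarrow> 'm vf" where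
  "lie X Y = (\<lambda>g p. X (Y g) p - Y (X g) p)"

definition one_forms :: "('m set \<times> ('m \<Rightarrow> 'e::euclidean_space)) set \<Rightarrow> 'm form set" where
  "one_forms A = {\<eta>.
     (\<forall>X\<in>vector_fields A. \<eta> X \<in> smooth_fns A) \<and>
     (\<forall>X\<in>vector_fields A. \<forall>Y\<in>vector_fields A. \<eta> (vf_add X Y) = (\<lambda>p. \<eta> X p + \<eta> Y p)) \<and>
     (\<forall>f\<in>smooth_fns A. \<forall>X\<in>vector_fields A. \<eta> (vf_smul f X) = (\<lambda>p. f p * \<eta> X p)) \<and>
     (\<forall>X. X \<notin> vector_fields A \<longrightarrow> \<eta> X = (\<lambda>p. 0))}"

definition affine_connection ::
  "('m set \<times> ('m \<Rightarrow> 'e::euclidean_space)) set \<Rightarrow> ('m vf \<Rightarrow> 'm vf \<Rightarrow> 'm vf) \<Rightarrow> bool" where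
  "affine_connection A nb \<longleftrightarrow>
     (\<forall>X\<in>vector_fields A. \<forall>Y\<in>vector_fields A. nb X Y \<in> vector_fields A) \<and>
     (\<forall>X\<in>vector_fields A. \<forall>X'\<in>vector_fields A. \<forall>Y\<in>vector_fields A.
        nb (vf_add X X') Y = vf_add (nb X Y) (nb X' Y)) \<and>
     (\<forall>X\<in>vector_fields A. \<forall>Y\<in>vector_fields A. \<forall>Y'\<in>vector_fields A.
        nb X (vf_add Y Y') = vf_add (nb X Y) (nb X Y')) \<and>
     (\<forall>f\<in>smooth_fns A. \<forall>X\<in>vector_fields A. \<forall>Y\<in>vector_fields A.
        nb (vf_smul f X) Y = vf_smul f (nb X Y) \<and>
        nb X (vf_smul f Y) = vf_add (vf_smul (X f) Y) (vf_smul f (nb X Y)))"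

definition form_nabla ::
  "('m set \<times> ('m \<Rightarrow> 'e::euclidean_space)) set \<Rightarrow> ('m vf \<Rightarrow> 'm vf \<Rightarrow> 'm vf) \<Rightarrow> 'm vf \<Rightarrow> 'm form \<Rightarrow> 'm form" where
  "form_nabla A nb X \<eta> = (\<lambda>Y. if Y \<in> vector_fields A then (\<lambda>p. X (\<eta> Y) p - \<eta> (nb X Y) p) else (\<lambda>p. 0))"

definition sections :: "('m set \<times> ('m \<Rightarrow> 'e::euclidean_space)) set \<Rightarrow> 'm sec set" where
  "sections A = vector_fields A \<times> one_forms A"

definition sec_add :: "'m sec \<Rightarrow> 'm sec \<Rightarrow> 'm sec" where
  "sec_add \<sigma> \<tau> = (vf_add (fst \<sigma>) (fst \<tau>), \<lambda>Z p. snd \<sigma> Z p + snd \<tau> Z p)"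

definition sec_smul :: "'m fn \<Rightarrow> 'm sec \<Rightarrow> 'm sec" where
  "sec_smul f \<sigma> = (vf_smul f (fst \<sigma>), \<lambda>Z p. f p * snd \<sigma> Z p)"

definition sec_scale :: "real \<Rightarrow> 'm sec \<Rightarrow> 'm sec" where
  "sec_scale c \<sigma> = sec_smul (\<lambda>p. c) \<sigma>"

definition sec_neg :: "'m sec \<Rightarrow> 'm sec" where
  "sec_neg \<sigma> = sec_scale (-1) \<sigma>"

definition sec_sub :: "'m sec \<Rightarrow> 'm sec \<Rightarrow> 'm sec" where
  "sec_sub \<sigma> \<tau> = sec_add \<sigma> (sec_neg \<tau>)"

definition sec_zero :: "'m sec" where
  "sec_zero = ((\<lambda>g p. 0), (\<lambda>Z p. 0))"

definition nbracket ::
  "('m set \<times> ('m \<Rightarrow> 'e::euclidean_space)) set \<Rightarrow> ('m vf \<Rightarrow> 'm vf \<Rightarrow> 'm vf) \<Rightarrow> 'm sec \<Rightarrow> 'm sec \<Rightarrow> 'm sec" where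
  "nbracket A nb \<sigma> \<tau> = (lie (fst \<sigma>) (fst \<tau>),
      \<lambda>Z p. form_nabla A nb (fst \<sigma>) (snd \<tau>) Z p - form_nabla A nb (fst \<tau>) (snd \<sigma>) Z p)"

definition gen_endo :: "('m set \<times> ('m \<Rightarrow> 'e::euclidean_space)) set \<Rightarrow> ('m sec \<Rightarrow> 'm sec) \<Rightarrow> bool" where
  "gen_endo A K \<longleftrightarrow>
     (\<forall>\<sigma>\<in>sections A. K \<sigma> \<in> sections A) \<and>
     (\<forall>\<sigma>\<in>sections A. \<forall>\<tau>\<in>sections A. K (sec_add \<sigma> \<tau>) = sec_add (K \<sigma>) (K \<tau>)) \<and>
     (\<forall>f\<in>smooth_fns A. \<forall>\<sigma>\<in>sections A. K (sec_smul f \<sigma>) = sec_smul f (K \<sigma>))"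

definition nijenhuis ::
  "('m set \<times> ('m \<Rightarrow> 'e::euclidean_space)) set \<Rightarrow> ('m vf \<Rightarrow> 'm vf \<Rightarrow> 'm vf) \<Rightarrow> ('m sec \<Rightarrow> 'm sec)
     \<Rightarrow> 'm sec \<Rightarrow> 'm sec \<Rightarrow> 'm sec" where
  "nijenhuis A nb K \<sigma> \<tau> =
     sec_add (sec_sub (sec_sub (nbracket A nb (K \<sigma>) (K \<tau>))
                               (K (nbracket A nb (K \<sigma>) \<tau>)))
                      (K (nbracket A nb \<sigma> (K \<tau>))))
             (K (K (nbracket A nb \<sigma> \<tau>)))"

definition nabla_integrable ::
  "('m set \<times> ('m \<Rightarrow> 'e::euclidean_space)) set \<Rightarrow> ('m vf \<Rightarrow> 'm vf \<Rightarrow> 'm vf) \<Rightarrow> ('m sec \<Rightarrow> 'm sec) \<Rightarrow> bool" where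
  "nabla_integrable A nb K \<longleftrightarrow>
     (\<forall>\<sigma>\<in>sections A. \<forall>\<tau>\<in>sections A. nijenhuis A nb K \<sigma> \<tau> = sec_zero)"

definition gen_quaternionic ::
  "('m set \<times> ('m \<Rightarrow> 'e::euclidean_space)) set \<Rightarrow> ('m vf \<Rightarrow> 'm vf \<Rightarrow> 'm vf)
     \<Rightarrow> ('m sec \<Rightarrow> 'm sec) \<Rightarrow> ('m sec \<Rightarrow> 'm sec) \<Rightarrow> bool" where
  "gen_quaternionic A nb J1 J2 \<longleftrightarrow>
     gen_endo A J1 \<and> gen_endo A J2 \<and>
     (\<forall>\<sigma>\<in>sections A. J1 (J1 \<sigma>) = sec_neg \<sigma>) \<and>
     (\<forall>\<sigma>\<in>sections A. J2 (J2 \<sigma>) = sec_neg \<sigma>) \<and>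
     (\<forall>\<sigma>\<in>sections A. J1 (J2 \<sigma>) = sec_neg (J2 (J1 \<sigma>))) \<and>
     nabla_integrable A nb J1 \<and> nabla_integrable A nb J2 \<and> nabla_integrable A nb (J1 \<circ> J2)"

definition gen_affine_connection ::
  "('m set \<times> ('m \<Rightarrow> 'e::euclidean_space)) set \<Rightarrow> ('m sec \<Rightarrow> 'm sec \<Rightarrow> 'm sec) \<Rightarrow> bool" where
  "gen_affine_connection A D \<longleftrightarrow>
     (\<forall>\<sigma>\<in>sections A. \<forall>\<tau>\<in>sections A. D \<sigma> \<tau> \<in> sections A) \<and>
     (\<forall>\<sigma>\<in>sections A. \<forall>\<sigma>'\<in>sections A. \<forall>\<tau>\<in>sections A.
        D (sec_add \<sigma> \<sigma>') \<tau> = sec_add (D \<sigma> \<tau>) (D \<sigma>' \<tau>)) \<and>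
     (\<forall>\<sigma>\<in>sections A. \<forall>\<tau>\<in>sections A. \<forall>\<tau>'\<in>sections A.
        D \<sigma> (sec_add \<tau> \<tau>') = sec_add (D \<sigma> \<tau>) (D \<sigma> \<tau>')) \<and>
     (\<forall>f\<in>smooth_fns A. \<forall>\<sigma>\<in>sections A. \<forall>\<tau>\<in>sections A.
        D (sec_smul f \<sigma>) \<tau> = sec_smul f (D \<sigma> \<tau>) \<and>
        D \<sigma> (sec_smul f \<tau>) = sec_add (sec_smul (fst \<sigma> f) \<tau>) (sec_smul f (D \<sigma> \<tau>)))"

text \<open>Complex sections of E tensor C are pairs (a,b) meaning a + i b; complex-bilinear
  extension of a real bilinear operation B.\<close>
definition cext :: "('m sec \<Rightarrow> 'm sec \<Rightarrow> 'm sec) \<Rightarrow> 'm sec \<times> 'm sec \<Rightarrow> 'm sec \<times> 'm sec \<Rightarrow> 'm sec \<times> 'm sec" where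
  "cext B s t = (sec_sub (B (fst s) (fst t)) (B (snd s) (snd t)),
                 sec_add (B (fst s) (snd t)) (B (snd s) (fst t)))"

definition csub :: "'m sec \<times> 'm sec \<Rightarrow> 'm sec \<times> 'm sec \<Rightarrow> 'm sec \<times> 'm sec" where
  "csub s t = (sec_sub (fst s) (fst t), sec_sub (snd s) (snd t))"

definition is_canonical_connection ::
  "('m set \<times> ('m \<Rightarrow> 'e::euclidean_space)) set \<Rightarrow> ('m vf \<Rightarrow> 'm vf \<Rightarrow> 'm vf)
     \<Rightarrow> ('m sec \<Rightarrow> 'm sec) \<Rightarrow> ('m sec \<Rightarrow> 'm sec) \<Rightarrow> ('m sec \<Rightarrow> 'm sec \<Rightarrow> 'm sec) \<Rightarrow> bool" where
  "is_canonical_connection A nb J1 J2 D \<longleftrightarrow>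
     gen_affine_connection A D \<and>
     (\<forall>K\<in>{J1, J2, J1 \<circ> J2}. \<forall>\<sigma>\<in>sections A. \<forall>\<tau>\<in>sections A. D \<sigma> (K \<tau>) = K (D \<sigma> \<tau>)) \<and>
     (\<forall>\<sigma>\<in>sections A. \<forall>\<tau>\<in>sections A.
        (let s = (\<sigma>, sec_neg (J1 \<sigma>)); t = (\<tau>, J1 \<tau>)
         in csub (csub (cext D s t) (cext D t s)) (cext (nbracket A nb) s t) = (sec_zero, sec_zero)))"

definition obata ::
  "('m set \<times> ('m \<Rightarrow> 'e::euclidean_space)) set \<Rightarrow> ('m vf \<Rightarrow> 'm vf \<Rightarrow> 'm vf)
     \<Rightarrow> ('m sec \<Rightarrow> 'm sec) \<Rightarrow> ('m sec \<Rightarrow> 'm sec) \<Rightarrow> 'm sec \<Rightarrow> 'm sec \<Rightarrow> 'm sec" where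
  "obata A nb J1 J2 \<sigma> \<tau> =
     (let J3 = J1 \<circ> J2; br = nbracket A nb;
          cyc = (\<lambda>Ja Jb Jc. Ja (sec_add (br (Jb \<sigma>) (Jc \<tau>)) (br (Jb \<tau>) (Jc \<sigma>))));
          dia = (\<lambda>Ja. Ja (sec_add (br (Ja \<sigma>) \<tau>) (br (Ja \<tau>) \<sigma>)));
          t1 = sec_add (sec_add (cyc J1 J2 J3) (cyc J2 J3 J1)) (cyc J3 J1 J2);
          t2 = sec_add (sec_add (dia J1) (dia J2)) (dia J3);
          t3 = sec_add (sec_add (nijenhuis A nb J1 \<sigma> \<tau>) (nijenhuis A nb J2 \<sigma> \<tau>))
                       (nijenhuis A nb J3 \<sigma> \<tau>)
      in sec_add (sec_scale (1/12) (sec_sub (sec_add t1 (sec_scale 2 t2)) t3))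
                 (sec_scale (1/2) (br \<sigma> \<tau>)))"

end

(*
  Both halves of the statement are a computation in the algebra generated by the bracket and the
  quaternionic units.  The Obata formula is a part symmetric in the two arguments plus half the
  bracket, so it is torsion-free, and torsion-freeness gives the torsion condition on V1 x V2 for
  every complexified pair.  Expanding it into the 64 brackets J_a [J_b x, J_c y], the defect
  D_x (J1 y) - J1 (D_x y) is a fixed combination of Nijenhuis tensors and hence vanishes; the
  formula is invariant under the cyclic permutation (J1, J2, J3) -> (J2, J3, J1), which gives
  compatibility with J2 and then with J3.  The Leibniz rules follow from the same expansion.
  For uniqueness, the difference T of two such connections is J1- and J2-linear in its second
  argument, and the torsion condition makes T(a,b) + T(J1 a, J1 b) symmetric.  Then
  P(a,b) = T(a,b) + J1 T(J1 a, b) is both symmetric and antisymmetric, hence zero, and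
  P(a, J2 b) = J2 (T(a,b) - J1 T(J1 a, b)); adding the two gives 2 T = 0.
*)

theory Submission
  imports Defs "HOL-Library.Function_Algebras"
begin

section \<open>Formal linear combinations\<close>

text \<open>Identities between linear combinations of finitely many atoms are decided by comparing
  coefficients.  Only the direction ``equal coefficients imply equal vectors'' is needed, so the
  atoms need not be linearly independent.\<close>

definition lincomb :: "(real \<times> 'i) list \<Rightarrow> ('i \<Rightarrow> 'v::real_vector) \<Rightarrow> 'v" where
  "lincomb cs f = sum_list (map (\<lambda>(c, k). c *\<^sub>R f k) cs)"

definition coeff :: "(real \<times> 'i) list \<Rightarrow> 'i \<Rightarrow> real" where
  "coeff cs k = sum_list (map (\<lambda>(c, j). if j = k then c else 0) cs)"

lemma coeff_Nil [simp]: "coeff [] k = 0"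
  and coeff_Cons [simp]: "coeff ((c, j) # cs) k = (if j = k then c else 0) + coeff cs k"
  by (simp_all add: coeff_def)

lemma lincomb_eq_sum:
  assumes "finite K" and "snd ` set cs \<subseteq> K"
  shows "lincomb cs f = (\<Sum>k\<in>K. coeff cs k *\<^sub>R f k)"
  using assms(2)
proof (induction cs)
  case Nil
  then show ?case by (simp add: lincomb_def coeff_def)
next
  case (Cons cj cs)
  obtain c j where cj: "cj = (c, j)" by fastforce
  with Cons.prems have "j \<in> K" by auto
  have "lincomb (cj # cs) f = c *\<^sub>R f j + lincomb cs f"
    by (simp add: lincomb_def cj)
  also have "\<dots> = (\<Sum>k\<in>K. if j = k then c *\<^sub>R f k else 0) + (\<Sum>k\<in>K. coeff cs k *\<^sub>R f k)"
    using Cons \<open>j \<in> K\<close> assms(1) by (simp add: sum.delta)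
  also have "\<dots> = (\<Sum>k\<in>K. coeff (cj # cs) k *\<^sub>R f k)"
    by (auto simp: coeff_def cj scaleR_add_left sum.distrib[symmetric] intro: sum.cong)
  finally show ?case .
qed

lemma lincomb_eqI:
  assumes "\<forall>k \<in> snd ` set cs \<union> snd ` set ds. coeff cs k = coeff ds k"
  shows "lincomb cs f = lincomb ds f"
  using assms by (simp add: lincomb_eq_sum[of "snd ` set cs \<union> snd ` set ds"])

lemma lincomb_single: "f k = lincomb [(1, k)] f"
  and lincomb_append: "lincomb cs f + lincomb ds f = lincomb (cs @ ds) f"
  and lincomb_scaleR: "r *\<^sub>R lincomb cs f = lincomb (map (\<lambda>(c, k). (r * c, k)) cs) f"
  by (induction cs) (auto simp: lincomb_def scaleR_add_right)

lemma lincomb_uminus: "- lincomb cs f = lincomb (map (\<lambda>(c, k). (- c, k)) cs) f"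
  by (induction cs) (auto simp: lincomb_def)

lemma lincomb_diff: "lincomb cs f - lincomb ds f = lincomb (cs @ map (\<lambda>(c, k). (- c, k)) ds) f"
  by (simp add: lincomb_uminus lincomb_append[symmetric])

lemmas lincomb_normalize = lincomb_append lincomb_diff lincomb_uminus lincomb_scaleR

section \<open>Integrable quaternionic brackets\<close>

datatype qunit = Q1 | Qi | Qj | Qk

text \<open>\<^term>\<open>qmult p q = (s, r)\<close> means \<open>p q = s r\<close> for the quaternion units.\<close>

fun qmult :: "qunit \<Rightarrow> qunit \<Rightarrow> real \<times> qunit" where
  "qmult Q1 q = (1, q)"
| "qmult q Q1 = (1, q)"
| "qmult Qi Qi = (-1, Q1)" | "qmult Qi Qj = (1, Qk)" | "qmult Qi Qk = (-1, Qj)"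
| "qmult Qj Qi = (-1, Qk)" | "qmult Qj Qj = (-1, Q1)" | "qmult Qj Qk = (1, Qi)"
| "qmult Qk Qi = (1, Qj)" | "qmult Qk Qj = (-1, Qi)" | "qmult Qk Qk = (-1, Q1)"

locale quaternionic_structure =
  fixes S :: "'v::real_vector set" and J1 J2 :: "'v \<Rightarrow> 'v"
  assumes add_closed: "x \<in> S \<Longrightarrow> y \<in> S \<Longrightarrow> x + y \<in> S"
    and scaleR_closed: "x \<in> S \<Longrightarrow> c *\<^sub>R x \<in> S"
    and J1_closed: "x \<in> S \<Longrightarrow> J1 x \<in> S"
    and J2_closed: "x \<in> S \<Longrightarrow> J2 x \<in> S"
    and J1_add: "x \<in> S \<Longrightarrow> y \<in> S \<Longrightarrow> J1 (x + y) = J1 x + J1 y"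
    and J2_add: "x \<in> S \<Longrightarrow> y \<in> S \<Longrightarrow> J2 (x + y) = J2 x + J2 y"
    and J1_scaleR: "x \<in> S \<Longrightarrow> J1 (c *\<^sub>R x) = c *\<^sub>R J1 x"
    and J2_scaleR: "x \<in> S \<Longrightarrow> J2 (c *\<^sub>R x) = c *\<^sub>R J2 x"
    and J1_J1: "x \<in> S \<Longrightarrow> J1 (J1 x) = - x"
    and J2_J2: "x \<in> S \<Longrightarrow> J2 (J2 x) = - x"
    and J1_J2: "x \<in> S \<Longrightarrow> J1 (J2 x) = - J2 (J1 x)"
begin

lemma uminus_closed: "x \<in> S \<Longrightarrow> - x \<in> S"
  using scaleR_closed[of x "-1"] by simp

lemma diff_closed: "x \<in> S \<Longrightarrow> y \<in> S \<Longrightarrow> x - y \<in> S"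
  using add_closed uminus_closed by (metis diff_conv_add_uminus)

lemma J1_uminus: "x \<in> S \<Longrightarrow> J1 (- x) = - J1 x"
  using J1_scaleR[of x "-1"] by simp

lemma J2_uminus: "x \<in> S \<Longrightarrow> J2 (- x) = - J2 x"
  using J2_scaleR[of x "-1"] by simp

lemma J1_diff: "x \<in> S \<Longrightarrow> y \<in> S \<Longrightarrow> J1 (x - y) = J1 x - J1 y"
  by (simp only: diff_conv_add_uminus J1_add J1_uminus uminus_closed)

lemma J2_diff: "x \<in> S \<Longrightarrow> y \<in> S \<Longrightarrow> J2 (x - y) = J2 x - J2 y"
  by (simp only: diff_conv_add_uminus J2_add J2_uminus uminus_closed)

lemma J2_J1: "x \<in> S \<Longrightarrow> J2 (J1 x) = - J1 (J2 x)"
  by (simp add: J1_J2)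

lemma J2_J1_J2: "x \<in> S \<Longrightarrow> J2 (J1 (J2 x)) = J1 x"
  by (simp add: J2_J1 J1_J1 J2_J2 J1_uminus J2_closed)

primrec qact :: "qunit \<Rightarrow> 'v \<Rightarrow> 'v" where
  "qact Q1 x = x"
| "qact Qi x = J1 x"
| "qact Qj x = J2 x"
| "qact Qk x = J1 (J2 x)"

declare qact.simps [simp del]

lemma qact_Q1 [simp]: "qact Q1 x = x"
  by (simp add: qact.simps)

lemma qact_closed [simp]: "x \<in> S \<Longrightarrow> qact q x \<in> S"
  by (cases q) (simp_all add: qact.simps J1_closed J2_closed)

lemma qact_scaleR: "x \<in> S \<Longrightarrow> qact q (c *\<^sub>R x) = c *\<^sub>R qact q x"
  by (cases q) (simp_all add: qact.simps J1_scaleR J2_scaleR J2_closed)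

lemma qact_add: "x \<in> S \<Longrightarrow> y \<in> S \<Longrightarrow> qact q (x + y) = qact q x + qact q y"
  by (cases q) (simp_all add: qact.simps J1_add J2_add J2_closed)

lemma qact_uminus: "x \<in> S \<Longrightarrow> qact q (- x) = - qact q x"
  using qact_scaleR[of x q "-1"] by simp

lemma qact_diff: "x \<in> S \<Longrightarrow> y \<in> S \<Longrightarrow> qact q (x - y) = qact q x - qact q y"
  by (simp only: diff_conv_add_uminus qact_add qact_uminus uminus_closed)

lemma qact_qact:
  assumes "x \<in> S"
  shows "qact p (qact q x) = fst (qmult p q) *\<^sub>R qact (snd (qmult p q)) x"
  using assms
  by (cases p; cases q) (simp_all add: qact.simps J1_J1 J2_J2 J2_J1 J1_closed J2_closed J1_uminus J2_uminus)

lemma J_linear_tensor_eq_0: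
  assumes closed: "\<And>a b. a \<in> S \<Longrightarrow> b \<in> S \<Longrightarrow> T a b \<in> S"
    and J1_right: "\<And>a b. a \<in> S \<Longrightarrow> b \<in> S \<Longrightarrow> T a (J1 b) = J1 (T a b)"
    and J2_right: "\<And>a b. a \<in> S \<Longrightarrow> b \<in> S \<Longrightarrow> T a (J2 b) = J2 (T a b)"
    and uminus_left: "\<And>a b. a \<in> S \<Longrightarrow> b \<in> S \<Longrightarrow> T (- a) b = - T a b"
    and skew: "\<And>a b. a \<in> S \<Longrightarrow> b \<in> S \<Longrightarrow> T a b + T (J1 a) (J1 b) = T b a + T (J1 b) (J1 a)"
    and x: "x \<in> S" and y: "y \<in> S"
  shows "T x y = 0"
proof -
  have uminus_right: "T a (- b) = - T a b" if "a \<in> S" "b \<in> S" for a b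
    using that J1_right[of a "J1 b"] by (simp add: J1_right J1_J1 J1_closed closed)
  define P where "P a b = T a b + J1 (T (J1 a) b)" for a b
  have P_sym: "P a b = P b a" if "a \<in> S" "b \<in> S" for a b
    using that skew[of a b] by (simp add: P_def J1_right J1_closed)
  have P_antisym: "P a b + P b a = 0" if "a \<in> S" "b \<in> S" for a b
  proof -
    have "J1 (T a b) - T (J1 a) b = T (J1 b) a - J1 (T b a)"
      using that skew[of a "J1 b"]
      by (simp add: J1_right J1_J1 J1_closed uminus_left uminus_right algebra_simps)
    then have "J1 (J1 (T a b) - T (J1 a) b) = J1 (T (J1 b) a - J1 (T b a))"
      by simp
    then show ?thesis
      using that by (simp add: P_def J1_diff J1_J1 J1_closed closed algebra_simps neg_eq_iff_add_eq_0)
  qed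
  have P_0: "P a b = 0" if "a \<in> S" "b \<in> S" for a b
    using P_sym[OF that] P_antisym[OF that] by (simp flip: scaleR_2)
  have Q_0: "T a b - J1 (T (J1 a) b) = 0" if "a \<in> S" "b \<in> S" for a b
  proof -
    have "J2 (T a b - J1 (T (J1 a) b)) = P a (J2 b)"
      using that by (simp add: P_def J2_right J2_J1 J1_closed J2_closed closed J2_diff)
    then have "J2 (J2 (T a b - J1 (T (J1 a) b))) = 0"
      using that P_0[of a "J2 b"] J2_scaleR[of a 0] by (simp add: J2_closed)
    then show ?thesis
      using that by (simp add: J2_J2 J1_closed closed diff_closed)
  qed
  show ?thesis
    using P_0[OF x y] Q_0[OF x y] by (simp add: P_def flip: scaleR_2)
qed

end

definition nijenhuis_tensor :: "('v \<Rightarrow> 'v \<Rightarrow> 'v) \<Rightarrow> ('v \<Rightarrow> 'v) \<Rightarrow> 'v \<Rightarrow> 'v \<Rightarrow> 'v::ab_group_add" where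
  "nijenhuis_tensor br L x y = br (L x) (L y) - L (br (L x) y) - L (br x (L y)) + L (L (br x y))"

locale integrable_quaternionic_bracket = quaternionic_structure S J1 J2
  for S :: "'v::real_vector set" and J1 J2 +
  fixes br :: "'v \<Rightarrow> 'v \<Rightarrow> 'v"
  assumes br_closed: "x \<in> S \<Longrightarrow> y \<in> S \<Longrightarrow> br x y \<in> S"
    and br_add_left: "x \<in> S \<Longrightarrow> y \<in> S \<Longrightarrow> z \<in> S \<Longrightarrow> br (x + y) z = br x z + br y z"
    and br_scaleR_left: "x \<in> S \<Longrightarrow> y \<in> S \<Longrightarrow> br (c *\<^sub>R x) y = c *\<^sub>R br x y"
    and br_antisym: "br x y = - br y x"
    and J1_integrable: "x \<in> S \<Longrightarrow> y \<in> S \<Longrightarrow> nijenhuis_tensor br J1 x y = 0"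
    and J2_integrable: "x \<in> S \<Longrightarrow> y \<in> S \<Longrightarrow> nijenhuis_tensor br J2 x y = 0"
    and J1J2_integrable: "x \<in> S \<Longrightarrow> y \<in> S \<Longrightarrow> nijenhuis_tensor br (\<lambda>z. J1 (J2 z)) x y = 0"
begin

lemma br_add_right: "x \<in> S \<Longrightarrow> y \<in> S \<Longrightarrow> z \<in> S \<Longrightarrow> br z (x + y) = br z x + br z y"
  by (metis br_antisym br_add_left minus_add_distrib)

lemma br_scaleR_right: "x \<in> S \<Longrightarrow> y \<in> S \<Longrightarrow> br y (c *\<^sub>R x) = c *\<^sub>R br y x"
  by (metis br_antisym br_scaleR_left scaleR_minus_right)

lemma br_uminus_left: "x \<in> S \<Longrightarrow> y \<in> S \<Longrightarrow> br (- x) y = - br x y"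
  using br_scaleR_left[of x y "-1"] by simp

lemma br_uminus_right: "x \<in> S \<Longrightarrow> y \<in> S \<Longrightarrow> br y (- x) = - br y x"
  using br_scaleR_right[of x y "-1"] by simp

lemma br_diff_left: "x \<in> S \<Longrightarrow> y \<in> S \<Longrightarrow> z \<in> S \<Longrightarrow> br (x - y) z = br x z - br y z"
  by (simp only: diff_conv_add_uminus br_add_left br_uminus_left uminus_closed)

lemma br_diff_right: "x \<in> S \<Longrightarrow> y \<in> S \<Longrightarrow> z \<in> S \<Longrightarrow> br z (x - y) = br z x - br z y"
  by (simp only: diff_conv_add_uminus br_add_right br_uminus_right uminus_closed)

lemma qact_integrable: "x \<in> S \<Longrightarrow> y \<in> S \<Longrightarrow> nijenhuis_tensor br (qact q) x y = 0"
  using J1_integrable J2_integrable J1J2_integrable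
  by (cases q) (simp_all add: nijenhuis_tensor_def qact.simps)

definition obata_term :: "qunit \<Rightarrow> qunit \<Rightarrow> qunit \<Rightarrow> 'v \<Rightarrow> 'v \<Rightarrow> 'v" where
  "obata_term a b c x y = qact a (br (qact b x) (qact c y) + br (qact b y) (qact c x))"

text \<open>The generalized Obata connection without its Nijenhuis terms, which vanish here.\<close>

definition obata_conn :: "'v \<Rightarrow> 'v \<Rightarrow> 'v" where
  "obata_conn x y =
     (1/12) *\<^sub>R (obata_term Qi Qj Qk x y + obata_term Qj Qk Qi x y + obata_term Qk Qi Qj x y
        + 2 *\<^sub>R (obata_term Qi Qi Q1 x y + obata_term Qj Qj Q1 x y + obata_term Qk Qk Q1 x y))
     + (1/2) *\<^sub>R br x y"

lemma obata_conn_torsion_free: "obata_conn x y - obata_conn y x = br x y"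
proof -
  have "obata_term a b c x y = obata_term a b c y x" for a b c
    by (simp add: obata_term_def add.commute)
  then show ?thesis
    by (simp add: obata_conn_def br_antisym[of y x] flip: scaleR_add_left)
qed

lemmas bracket_normalize =
  add_closed scaleR_closed uminus_closed diff_closed br_closed
  qact_add qact_scaleR qact_uminus qact_diff qact_qact
  br_add_left br_add_right br_scaleR_left br_scaleR_right br_uminus_left br_uminus_right
  br_diff_left br_diff_right

lemma obata_conn_closed: "x \<in> S \<Longrightarrow> y \<in> S \<Longrightarrow> obata_conn x y \<in> S"
  by (simp add: obata_conn_def obata_term_def bracket_normalize)

lemma obata_conn_add_left:
  "x \<in> S \<Longrightarrow> x' \<in> S \<Longrightarrow> y \<in> S \<Longrightarrow> obata_conn (x + x') y = obata_conn x y + obata_conn x' y"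
  by (simp add: obata_conn_def obata_term_def bracket_normalize algebra_simps)

lemma obata_conn_add_right:
  "x \<in> S \<Longrightarrow> y \<in> S \<Longrightarrow> y' \<in> S \<Longrightarrow> obata_conn x (y + y') = obata_conn x y + obata_conn x y'"
  by (simp add: obata_conn_def obata_term_def bracket_normalize algebra_simps)

lemma obata_conn_uminus_left: "x \<in> S \<Longrightarrow> y \<in> S \<Longrightarrow> obata_conn (- x) y = - obata_conn x y"
  by (simp add: obata_conn_def obata_term_def bracket_normalize algebra_simps)

text \<open>Pushing the \<open>J\<close>'s inwards turns every term built from \<open>x\<close>, \<open>y\<close>, the bracket and the
  \<open>J\<close>'s into a signed sum of these 64 brackets \<open>J\<^sub>a [J\<^sub>b x, J\<^sub>c y]\<close>.\<close>

definition br_atom :: "'v \<Rightarrow> 'v \<Rightarrow> qunit \<times> qunit \<times> qunit \<Rightarrow> 'v" where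
  "br_atom x y = (\<lambda>(a, b, c). qact a (br (qact b x) (qact c y)))"

lemma br_atom_closed [simp]: "x \<in> S \<Longrightarrow> y \<in> S \<Longrightarrow> br_atom x y k \<in> S"
  by (auto simp: br_atom_def br_closed split: prod.split)

lemma br_atom_intro:
  "br (qact b x) (qact c y) = br_atom x y (Q1, b, c)"
  "br x (qact c y) = br_atom x y (Q1, Q1, c)"
  "br (qact b x) y = br_atom x y (Q1, b, Q1)"
  "br x y = br_atom x y (Q1, Q1, Q1)"
  "br (qact c y) (qact b x) = - br_atom x y (Q1, b, c)"
  "br (qact c y) x = - br_atom x y (Q1, Q1, c)"
  "br y (qact b x) = - br_atom x y (Q1, b, Q1)"
  "br y x = - br_atom x y (Q1, Q1, Q1)"
  by (simp_all add: br_atom_def br_antisym[of y] br_antisym[of "qact c y"])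

lemma qact_br_atom:
  "x \<in> S \<Longrightarrow> y \<in> S \<Longrightarrow>
    qact a (br_atom x y (a', b, c)) = fst (qmult a a') *\<^sub>R br_atom x y (snd (qmult a a'), b, c)"
  by (simp add: br_atom_def qact_qact br_closed)

text \<open>Stated with \<^term>\<open>qact Qi\<close> instead of \<open>J1\<close>: rewriting \<open>J1\<close> into \<open>qact Qi\<close>
  would loop, since \<open>qact\<close> is defined through \<open>J1\<close>.\<close>

lemma obata_conn_Qi_defect:
  assumes x: "x \<in> S" and y: "y \<in> S"
  shows "obata_conn x (qact Qi y) - qact Qi (obata_conn x y) =
    (1/12) *\<^sub>R (qact Qi (nijenhuis_tensor br (qact Qj) x y) + qact Qi (nijenhuis_tensor br (qact Qk) x y)
      - 2 *\<^sub>R nijenhuis_tensor br (qact Qi) x (qact Qi y) - nijenhuis_tensor br (qact Qj) x (qact Qi y)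
      - nijenhuis_tensor br (qact Qk) x (qact Qi y))"
  unfolding obata_conn_def obata_term_def nijenhuis_tensor_def
  by (simp add: x y bracket_normalize br_atom_intro[where x=x and y=y] qact_br_atom,
      simp only: lincomb_single[of "br_atom x y"] lincomb_normalize, rule lincomb_eqI, simp)

lemma obata_conn_J1_right: "x \<in> S \<Longrightarrow> y \<in> S \<Longrightarrow> obata_conn x (J1 y) = J1 (obata_conn x y)"
  using obata_conn_Qi_defect[of x y] qact_scaleR[of x Qi 0]
  by (simp add: qact_integrable qact.simps J1_closed)

lemma obata_conn_J2_right:
  assumes x: "x \<in> S" and y: "y \<in> S"
  shows "obata_conn x (J2 y) = J2 (obata_conn x y)"
proof -
  txt \<open>\<open>(J2, J1 J2, J1)\<close> is again an integrable quaternionic triple, and the Obata formula is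
    invariant under this cyclic permutation.\<close>
  interpret cyc: integrable_quaternionic_bracket S J2 "\<lambda>z. J1 (J2 z)" br
  proof
    show "\<And>x y. x \<in> S \<Longrightarrow> y \<in> S \<Longrightarrow> nijenhuis_tensor br (\<lambda>z. J2 (J1 (J2 z))) x y = 0"
      using J1_integrable by (simp add: nijenhuis_tensor_def J2_J1_J2 J1_closed br_closed)
    show "\<And>x y. br x y = - br y x"
      by (rule br_antisym)
  qed (simp_all add: add_closed scaleR_closed J1_closed J2_closed J1_add J2_add J1_scaleR J2_scaleR J2_J2
     J2_J1 J1_J1 J1_uminus br_closed br_add_left br_scaleR_left J2_integrable J1J2_integrable)
  have "cyc.obata_conn a b = obata_conn a b" if "a \<in> S" "b \<in> S" for a b
    using that
    by (simp add: cyc.obata_conn_def obata_conn_def cyc.obata_term_def obata_term_def cyc.qact.simps qact.simps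
        J2_J1_J2 add_closed br_closed J1_closed J2_closed add_ac)
  then show ?thesis
    using cyc.obata_conn_J1_right[OF x y] x y by (simp add: J2_closed)
qed

end

locale quaternionic_algebroid = integrable_quaternionic_bracket S J1 J2 br
  for S :: "'v::real_vector set" and J1 J2 br +
  fixes F :: "'f set" and smul :: "'f \<Rightarrow> 'v \<Rightarrow> 'v" and anchor :: "'v \<Rightarrow> 'f \<Rightarrow> 'f"
  assumes smul_closed: "f \<in> F \<Longrightarrow> x \<in> S \<Longrightarrow> smul f x \<in> S"
    and anchor_closed: "x \<in> S \<Longrightarrow> f \<in> F \<Longrightarrow> anchor x f \<in> F"
    and J1_smul: "f \<in> F \<Longrightarrow> x \<in> S \<Longrightarrow> J1 (smul f x) = smul f (J1 x)"
    and J2_smul: "f \<in> F \<Longrightarrow> x \<in> S \<Longrightarrow> J2 (smul f x) = smul f (J2 x)"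
    and smul_add: "smul f (x + y) = smul f x + smul f y"
    and smul_scaleR: "smul f (c *\<^sub>R x) = c *\<^sub>R smul f x"
    and br_smul_right:
      "x \<in> S \<Longrightarrow> y \<in> S \<Longrightarrow> f \<in> F \<Longrightarrow> br x (smul f y) = smul (anchor x f) y + smul f (br x y)"
begin

lemma smul_uminus: "smul f (- x) = - smul f x"
  using smul_scaleR[of f "-1" x] by simp

lemma smul_diff: "smul f (x - y) = smul f x - smul f y"
  by (simp only: diff_conv_add_uminus smul_add smul_uminus)

lemma br_smul_left:
  "x \<in> S \<Longrightarrow> y \<in> S \<Longrightarrow> f \<in> F \<Longrightarrow> br (smul f y) x = smul f (br y x) - smul (anchor x f) y"
  by (subst br_antisym) (simp add: br_smul_right smul_uminus br_antisym[of x y])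

lemma qact_smul: "f \<in> F \<Longrightarrow> x \<in> S \<Longrightarrow> qact q (smul f x) = smul f (qact q x)"
  by (cases q) (simp_all add: qact.simps J1_smul J2_smul J2_closed)

definition leibniz_atom :: "'v \<Rightarrow> 'v \<Rightarrow> 'f \<Rightarrow> (qunit \<times> qunit \<times> qunit) + (qunit \<times> qunit) \<Rightarrow> 'v" where
  "leibniz_atom x y f =
     case_sum (\<lambda>k. smul f (br_atom x y k)) (\<lambda>(b, c). smul (anchor (qact b x) f) (qact c y))"

lemma leibniz_atom_closed [simp]:
  "x \<in> S \<Longrightarrow> y \<in> S \<Longrightarrow> f \<in> F \<Longrightarrow> leibniz_atom x y f k \<in> S"
  by (auto simp: leibniz_atom_def smul_closed anchor_closed split: sum.split)

lemma leibniz_atom_intro: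
  "smul f (br_atom x y k) = leibniz_atom x y f (Inl k)"
  "smul (anchor (qact b x) f) (qact c y) = leibniz_atom x y f (Inr (b, c))"
  "smul (anchor x f) (qact c y) = leibniz_atom x y f (Inr (Q1, c))"
  "smul (anchor (qact b x) f) y = leibniz_atom x y f (Inr (b, Q1))"
  "smul (anchor x f) y = leibniz_atom x y f (Inr (Q1, Q1))"
  by (simp_all add: leibniz_atom_def)

lemma qact_leibniz_atom:
  assumes "x \<in> S" "y \<in> S" "f \<in> F"
  shows "qact a (leibniz_atom x y f (Inl (a', b, c))) =
      fst (qmult a a') *\<^sub>R leibniz_atom x y f (Inl (snd (qmult a a'), b, c))"
    and "qact a (leibniz_atom x y f (Inr (b, c))) =
      fst (qmult a c) *\<^sub>R leibniz_atom x y f (Inr (b, snd (qmult a c)))"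
  using assms
  by (simp_all add: leibniz_atom_def qact_smul qact_br_atom qact_qact smul_scaleR anchor_closed)

lemma obata_conn_smul_right:
  assumes x: "x \<in> S" and y: "y \<in> S" and f: "f \<in> F"
  shows "obata_conn x (smul f y) = smul (anchor x f) y + smul f (obata_conn x y)"
  unfolding obata_conn_def obata_term_def
  by (simp add: x y f bracket_normalize smul_closed anchor_closed qact_smul smul_add smul_scaleR smul_uminus
      smul_diff br_smul_right br_smul_left br_atom_intro[where x=x and y=y] qact_br_atom
      leibniz_atom_intro[where x=x and y=y] qact_leibniz_atom,
      simp only: lincomb_single[of "leibniz_atom x y f"] lincomb_normalize, rule lincomb_eqI, simp)

lemma obata_conn_smul_left:
  assumes x: "x \<in> S" and y: "y \<in> S" and f: "f \<in> F"
  shows "obata_conn (smul f x) y = smul f (obata_conn x y)"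
proof -
  have "obata_conn (smul f x) y = obata_conn y (smul f x) + br (smul f x) y"
    using obata_conn_torsion_free[of "smul f x" y] by (simp add: algebra_simps)
  also have "\<dots> = smul f (obata_conn y x + br x y)"
    using x y f by (simp add: obata_conn_smul_right br_smul_left smul_add)
  also have "obata_conn y x + br x y = obata_conn x y"
    using obata_conn_torsion_free[of x y] by (simp add: algebra_simps)
  finally show ?thesis .
qed

end

section \<open>Smooth functions\<close>

lemma cinf_on_coinductI:
  assumes "X S f"
    and "\<And>S f. X S f \<Longrightarrow> f differentiable_on S \<and>
           (\<forall>v. X S (\<lambda>x. frechet_derivative f (at x) v) \<or> cinf_on S (\<lambda>x. frechet_derivative f (at x) v))"
  shows "cinf_on S f"
  using assms(1) by (rule cinf_on.coinduct) (use assms(2) in blast)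

lemma cinf_onD:
  assumes "cinf_on S f"
  shows "f differentiable_on S" and "cinf_on S (\<lambda>x. frechet_derivative f (at x) v)"
  using assms by (auto elim: cinf_on.cases)

lemma cinf_on_const: "cinf_on S (\<lambda>x. c)"
proof (rule cinf_on_coinductI[where X = "\<lambda>S g. \<exists>c. g = (\<lambda>x. c)"])
  fix S and g :: "'a \<Rightarrow> real"
  assume "\<exists>c. g = (\<lambda>x. c)"
  moreover have "frechet_derivative (\<lambda>x. c) (at x) = (\<lambda>v. 0)" for c and x :: 'a
    by (rule frechet_derivative_at[symmetric]) (rule has_derivative_const)
  ultimately show "g differentiable_on S \<and>
      (\<forall>v. (\<exists>c. (\<lambda>x. frechet_derivative g (at x) v) = (\<lambda>x. c)) \<or> cinf_on S (\<lambda>x. frechet_derivative g (at x) v))"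
    by auto
qed auto

text \<open>Finite sums of products of smooth functions are closed under directional derivatives;
  this is the invariant for the coinductive proofs of closure under \<open>+\<close> and \<open>*\<close>.\<close>

definition sum_of_products :: "(('a \<Rightarrow> real) \<times> ('a \<Rightarrow> real)) list \<Rightarrow> 'a \<Rightarrow> real" where
  "sum_of_products ps x = (\<Sum>(f, g)\<leftarrow>ps. f x * g x)"

definition sum_of_products_deriv ::
  "(('a::real_normed_vector \<Rightarrow> real) \<times> ('a \<Rightarrow> real)) list \<Rightarrow> 'a \<Rightarrow> (('a \<Rightarrow> real) \<times> ('a \<Rightarrow> real)) list" where
  "sum_of_products_deriv ps v =
     concat (map (\<lambda>(f, g). [(f, \<lambda>x. frechet_derivative g (at x) v), (\<lambda>x. frechet_derivative f (at x) v, g)]) ps)"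

lemma has_derivative_sum_of_products:
  assumes "\<forall>(f, g)\<in>set ps. f differentiable at x \<and> g differentiable at x"
  shows "(sum_of_products ps has_derivative (\<lambda>v. sum_of_products (sum_of_products_deriv ps v) x)) (at x)"
  using assms
proof (induction ps)
  case Nil
  then show ?case by (simp add: sum_of_products_def sum_of_products_deriv_def)
next
  case (Cons fg ps)
  obtain f g where fg: "fg = (f, g)" by fastforce
  have f: "(f has_derivative frechet_derivative f (at x)) (at x)"
    and g: "(g has_derivative frechet_derivative g (at x)) (at x)"
    using Cons.prems fg by (auto simp: frechet_derivative_works[symmetric])
  have "((\<lambda>x. f x * g x + sum_of_products ps x) has_derivative
     (\<lambda>v. f x * frechet_derivative g (at x) v + frechet_derivative f (at x) v * g x
        + sum_of_products (sum_of_products_deriv ps v) x)) (at x)"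
    using Cons by (intro has_derivative_add has_derivative_mult f g) auto
  then show ?case
    by (simp add: sum_of_products_def sum_of_products_deriv_def fg add.assoc)
qed

lemma cinf_on_sum_of_products:
  assumes S: "open S" and ps: "\<forall>(f, g)\<in>set ps. cinf_on S f \<and> cinf_on S g"
  shows "cinf_on S (sum_of_products ps)"
proof -
  define X where "X S' h \<longleftrightarrow> S' = S \<and> (\<exists>qs. (\<forall>(f, g)\<in>set qs. cinf_on S f \<and> cinf_on S g)
      \<and> (\<forall>x\<in>S. sum_of_products qs x = h x))" for S' h
  have "X S (sum_of_products ps)"
    using ps by (auto simp: X_def)
  then show ?thesis
  proof (rule cinf_on_coinductI)
    fix S' h
    assume "X S' h"
    then obtain qs where S': "S' = S" and qs: "\<forall>(f, g)\<in>set qs. cinf_on S f \<and> cinf_on S g"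
      and h: "\<forall>x\<in>S. sum_of_products qs x = h x"
      unfolding X_def by blast
    have "\<forall>(f, g)\<in>set qs. f differentiable at x \<and> g differentiable at x" if "x \<in> S" for x
      using qs that S by (auto dest!: cinf_onD(1) simp: differentiable_on_eq_differentiable_at)
    then have h_deriv: "(h has_derivative (\<lambda>v. sum_of_products (sum_of_products_deriv qs v) x)) (at x)"
      if "x \<in> S" for x
      using that h by (intro has_derivative_transform_within_open[OF has_derivative_sum_of_products S]) auto
    have "h differentiable_on S"
      using h_deriv S differentiable_on_eq_differentiable_at differentiable_def by blast
    moreover have "\<forall>x\<in>S. sum_of_products (sum_of_products_deriv qs v) x = frechet_derivative h (at x) v" for v
      using frechet_derivative_at[OF h_deriv, symmetric] by simp
    moreover have "\<forall>(f, g)\<in>set (sum_of_products_deriv qs v). cinf_on S f \<and> cinf_on S g" for v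
      using qs by (auto simp: sum_of_products_deriv_def intro: cinf_onD(2))
    ultimately show "h differentiable_on S' \<and>
        (\<forall>v. X S' (\<lambda>x. frechet_derivative h (at x) v) \<or> cinf_on S' (\<lambda>x. frechet_derivative h (at x) v))"
      using S' unfolding X_def by blast
  qed
qed

lemma cinf_on_add:
  assumes "open S" "cinf_on S f" "cinf_on S g"
  shows "cinf_on S (\<lambda>x. f x + g x)"
  using cinf_on_sum_of_products[of S "[(f, \<lambda>x. 1), (g, \<lambda>x. 1)]"] assms
  by (simp add: sum_of_products_def[abs_def] cinf_on_const)

lemma cinf_on_mult:
  assumes "open S" "cinf_on S f" "cinf_on S g"
  shows "cinf_on S (\<lambda>x. f x * g x)"
  using cinf_on_sum_of_products[of S "[(f, g)]"] assms by (simp add: sum_of_products_def[abs_def])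

lemma smooth_const: "(\<lambda>p. c) \<in> smooth_fns A"
  by (auto simp: smooth_fns_def o_def cinf_on_const)

section \<open>Sections of \<open>TM \<oplus> T*M\<close>\<close>

instantiation "fun" :: (type, real_vector) real_vector
begin

definition scaleR_fun :: "real \<Rightarrow> ('a \<Rightarrow> 'b) \<Rightarrow> 'a \<Rightarrow> 'b" where
  "scaleR_fun r f = (\<lambda>x. r *\<^sub>R f x)"

instance
  by standard (simp_all add: scaleR_fun_def fun_eq_iff scaleR_add_right scaleR_add_left)

end

lemma scaleR_fun_apply [simp]: "(r *\<^sub>R f) x = r *\<^sub>R f x"
  by (simp add: scaleR_fun_def)

lemma sec_add_eq_plus: "sec_add \<sigma> \<tau> = \<sigma> + \<tau>"
  by (simp add: sec_add_def vf_add_def prod_eq_iff fun_eq_iff)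

lemma sec_smul_const: "sec_smul (\<lambda>p. c) \<sigma> = c *\<^sub>R \<sigma>"
  by (simp add: sec_smul_def vf_smul_def prod_eq_iff fun_eq_iff)

lemma sec_scale_eq_scaleR: "sec_scale c \<sigma> = c *\<^sub>R \<sigma>"
  by (simp add: sec_scale_def sec_smul_const)

lemma sec_neg_eq_uminus: "sec_neg \<sigma> = - \<sigma>"
  by (simp add: sec_neg_def sec_scale_eq_scaleR)

lemma sec_sub_eq_minus: "sec_sub \<sigma> \<tau> = \<sigma> - \<tau>"
  by (simp add: sec_sub_def sec_add_eq_plus sec_neg_eq_uminus)

lemma sec_zero_eq_zero: "sec_zero = 0"
  by (simp add: sec_zero_def prod_eq_iff fun_eq_iff)

lemmas sec_ops_eq = sec_add_eq_plus sec_scale_eq_scaleR sec_neg_eq_uminus sec_sub_eq_minus sec_zero_eq_zero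

lemma sec_smul_add: "sec_smul f (\<sigma> + \<tau>) = sec_smul f \<sigma> + sec_smul f \<tau>"
  by (simp add: sec_smul_def vf_smul_def prod_eq_iff fun_eq_iff algebra_simps)

lemma sec_smul_scaleR: "sec_smul f (c *\<^sub>R \<sigma>) = c *\<^sub>R sec_smul f \<sigma>"
  by (simp add: sec_smul_def vf_smul_def prod_eq_iff fun_eq_iff algebra_simps)

lemma nijenhuis_eq_nijenhuis_tensor: "nijenhuis A nb K \<sigma> \<tau> = nijenhuis_tensor (nbracket A nb) K \<sigma> \<tau>"
  by (simp add: nijenhuis_def nijenhuis_tensor_def sec_ops_eq)

lemma cext_torsion_eq_0:
  assumes torsion: "\<And>a b. a \<in> P \<Longrightarrow> b \<in> P \<Longrightarrow> D a b - D b a = B a b"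
    and "fst s \<in> P" "snd s \<in> P" "fst t \<in> P" "snd t \<in> P"
  shows "csub (csub (cext D s t) (cext D t s)) (cext B s t) = (sec_zero, sec_zero)"
  using assms(2-) by (simp add: cext_def csub_def sec_ops_eq torsion[symmetric] algebra_simps)

lemma vf_add_apply: "vf_add X Y g p = X g p + Y g p"
  by (simp add: vf_add_def)

lemma vf_smul_apply: "vf_smul f X g p = f p * X g p"
  by (simp add: vf_smul_def)

locale manifold_with_connection =
  fixes A :: "('m set \<times> ('m \<Rightarrow> 'e::euclidean_space)) set" and nb :: "'m vf \<Rightarrow> 'm vf \<Rightarrow> 'm vf"
  assumes manifold: "smooth_manifold A" and connection: "affine_connection A nb"
begin

abbreviation "C \<equiv> smooth_fns A"
abbreviation "VF \<equiv> vector_fields A"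
abbreviation "\<Omega> \<equiv> one_forms A"
abbreviation "\<Gamma> \<equiv> sections A"

lemma open_chart_image: "(U, \<phi>) \<in> A \<Longrightarrow> open (\<phi> ` U)"
  using manifold unfolding smooth_manifold_def by fastforce

lemma smooth_add: "f \<in> C \<Longrightarrow> g \<in> C \<Longrightarrow> (\<lambda>p. f p + g p) \<in> C"
  unfolding smooth_fns_def using open_chart_image by (auto simp: o_def intro!: cinf_on_add)

lemma smooth_mult: "f \<in> C \<Longrightarrow> g \<in> C \<Longrightarrow> (\<lambda>p. f p * g p) \<in> C"
  unfolding smooth_fns_def using open_chart_image by (auto simp: o_def intro!: cinf_on_mult)

lemma smooth_diff: "f \<in> C \<Longrightarrow> g \<in> C \<Longrightarrow> (\<lambda>p. f p - g p) \<in> C"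
  using smooth_add[of f "\<lambda>p. (- 1) * g p"] smooth_mult[OF smooth_const, of g "- 1"] by simp

lemma vf_smooth: "X \<in> VF \<Longrightarrow> X g \<in> C"
  unfolding vector_fields_def by (cases "g \<in> C") (auto simp: smooth_const)

lemma vf_add_fun: "X \<in> VF \<Longrightarrow> f \<in> C \<Longrightarrow> g \<in> C \<Longrightarrow> X (\<lambda>p. f p + g p) = (\<lambda>p. X f p + X g p)"
  and vf_mult_fun: "X \<in> VF \<Longrightarrow> f \<in> C \<Longrightarrow> g \<in> C \<Longrightarrow> X (\<lambda>p. f p * g p) = (\<lambda>p. f p * X g p + g p * X f p)"
  and vf_cmult_fun: "X \<in> VF \<Longrightarrow> f \<in> C \<Longrightarrow> X (\<lambda>p. c * f p) = (\<lambda>p. c * X f p)"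
  and vf_non_smooth: "X \<in> VF \<Longrightarrow> f \<notin> C \<Longrightarrow> X f = (\<lambda>p. 0)"
  unfolding vector_fields_def by blast+

lemma vf_const: "X \<in> VF \<Longrightarrow> X (\<lambda>p. c) = (\<lambda>p. 0)"
  using vf_mult_fun[OF _ smooth_const smooth_const, of X 1 1] vf_cmult_fun[OF _ smooth_const, of X c 1]
  by (simp add: fun_eq_iff)

lemma vector_fieldsI:
  assumes "\<And>f. f \<in> C \<Longrightarrow> X f \<in> C"
    and "\<And>f g. f \<in> C \<Longrightarrow> g \<in> C \<Longrightarrow> X (\<lambda>p. f p + g p) = (\<lambda>p. X f p + X g p)"
    and "\<And>f g. f \<in> C \<Longrightarrow> g \<in> C \<Longrightarrow> X (\<lambda>p. f p * g p) = (\<lambda>p. f p * X g p + g p * X f p)"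
    and "\<And>c f. f \<in> C \<Longrightarrow> X (\<lambda>p. c * f p) = (\<lambda>p. c * X f p)"
    and "\<And>f. f \<notin> C \<Longrightarrow> X f = (\<lambda>p. 0)"
  shows "X \<in> VF"
  using assms unfolding vector_fields_def by blast

lemma vf_add_closed: "X \<in> VF \<Longrightarrow> Y \<in> VF \<Longrightarrow> vf_add X Y \<in> VF"
  by (rule vector_fieldsI)
    (simp_all add: vf_add_def smooth_add vf_smooth vf_add_fun vf_mult_fun vf_cmult_fun vf_non_smooth algebra_simps)

lemma vf_smul_closed: "h \<in> C \<Longrightarrow> X \<in> VF \<Longrightarrow> vf_smul h X \<in> VF"
  by (rule vector_fieldsI)
    (simp_all add: vf_smul_def smooth_mult vf_smooth vf_add_fun vf_mult_fun vf_cmult_fun vf_non_smooth algebra_simps)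

lemma lie_mult_fun:
  assumes X: "X \<in> VF" and Y: "Y \<in> VF" and f: "f \<in> C" and g: "g \<in> C"
  shows "lie X Y (\<lambda>p. f p * g p) = (\<lambda>p. f p * lie X Y g p + g p * lie X Y f p)"
proof -
  have "X (Y (\<lambda>p. f p * g p)) = (\<lambda>p. f p * X (Y g) p + Y g p * X f p + (g p * X (Y f) p + Y f p * X g p))"
    using X Y f g by (simp add: vf_add_fun[OF X] vf_mult_fun[OF X] vf_mult_fun[OF Y] smooth_mult vf_smooth)
  moreover have "Y (X (\<lambda>p. f p * g p)) = (\<lambda>p. f p * Y (X g) p + X g p * Y f p + (g p * Y (X f) p + X f p * Y g p))"
    using X Y f g by (simp add: vf_add_fun[OF Y] vf_mult_fun[OF Y] vf_mult_fun[OF X] smooth_mult vf_smooth)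
  ultimately show ?thesis
    by (simp add: lie_def fun_eq_iff algebra_simps)
qed

lemma lie_closed:
  assumes X: "X \<in> VF" and Y: "Y \<in> VF"
  shows "lie X Y \<in> VF"
proof (rule vector_fieldsI)
  fix f g c
  show "f \<in> C \<Longrightarrow> lie X Y f \<in> C"
    using X Y by (simp add: lie_def smooth_diff vf_smooth)
  show "f \<in> C \<Longrightarrow> g \<in> C \<Longrightarrow> lie X Y (\<lambda>p. f p + g p) = (\<lambda>p. lie X Y f p + lie X Y g p)"
    using X Y by (simp add: lie_def vf_add_fun[OF X] vf_add_fun[OF Y] vf_smooth fun_eq_iff)
  show "f \<in> C \<Longrightarrow> g \<in> C \<Longrightarrow> lie X Y (\<lambda>p. f p * g p) = (\<lambda>p. f p * lie X Y g p + g p * lie X Y f p)"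
    by (rule lie_mult_fun[OF X Y])
  show "f \<in> C \<Longrightarrow> lie X Y (\<lambda>p. c * f p) = (\<lambda>p. c * lie X Y f p)"
    using X Y by (simp add: lie_def vf_cmult_fun[OF X] vf_cmult_fun[OF Y] vf_smooth algebra_simps)
  show "f \<notin> C \<Longrightarrow> lie X Y f = (\<lambda>p. 0)"
    using X Y by (simp add: lie_def vf_non_smooth vf_const)
qed

lemma connection_closed: "X \<in> VF \<Longrightarrow> Y \<in> VF \<Longrightarrow> nb X Y \<in> VF"
  and connection_add_left:
    "X \<in> VF \<Longrightarrow> X' \<in> VF \<Longrightarrow> Y \<in> VF \<Longrightarrow> nb (vf_add X X') Y = vf_add (nb X Y) (nb X' Y)"
  and connection_add_right:
    "X \<in> VF \<Longrightarrow> Y \<in> VF \<Longrightarrow> Y' \<in> VF \<Longrightarrow> nb X (vf_add Y Y') = vf_add (nb X Y) (nb X Y')"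
  and connection_smul_left: "f \<in> C \<Longrightarrow> X \<in> VF \<Longrightarrow> Y \<in> VF \<Longrightarrow> nb (vf_smul f X) Y = vf_smul f (nb X Y)"
  and connection_smul_right:
    "f \<in> C \<Longrightarrow> X \<in> VF \<Longrightarrow> Y \<in> VF \<Longrightarrow> nb X (vf_smul f Y) = vf_add (vf_smul (X f) Y) (vf_smul f (nb X Y))"
  using connection unfolding affine_connection_def by blast+

lemma form_smooth: "\<eta> \<in> \<Omega> \<Longrightarrow> X \<in> VF \<Longrightarrow> \<eta> X \<in> C"
  and form_add: "\<eta> \<in> \<Omega> \<Longrightarrow> X \<in> VF \<Longrightarrow> Y \<in> VF \<Longrightarrow> \<eta> (vf_add X Y) = (\<lambda>p. \<eta> X p + \<eta> Y p)"
  and form_smul: "\<eta> \<in> \<Omega> \<Longrightarrow> f \<in> C \<Longrightarrow> X \<in> VF \<Longrightarrow> \<eta> (vf_smul f X) = (\<lambda>p. f p * \<eta> X p)"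
  and form_non_vf: "\<eta> \<in> \<Omega> \<Longrightarrow> X \<notin> VF \<Longrightarrow> \<eta> X = (\<lambda>p. 0)"
  unfolding one_forms_def by blast+

lemma one_formsI:
  assumes "\<And>X. X \<in> VF \<Longrightarrow> \<eta> X \<in> C"
    and "\<And>X Y. X \<in> VF \<Longrightarrow> Y \<in> VF \<Longrightarrow> \<eta> (vf_add X Y) = (\<lambda>p. \<eta> X p + \<eta> Y p)"
    and "\<And>f X. f \<in> C \<Longrightarrow> X \<in> VF \<Longrightarrow> \<eta> (vf_smul f X) = (\<lambda>p. f p * \<eta> X p)"
    and "\<And>X. X \<notin> VF \<Longrightarrow> \<eta> X = (\<lambda>p. 0)"
  shows "\<eta> \<in> \<Omega>"
  using assms unfolding one_forms_def by blast

lemma form_add_closed: "\<eta> \<in> \<Omega> \<Longrightarrow> \<eta>' \<in> \<Omega> \<Longrightarrow> (\<lambda>Z p. \<eta> Z p + \<eta>' Z p) \<in> \<Omega>"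
  by (rule one_formsI) (simp_all add: smooth_add form_smooth form_add form_smul form_non_vf algebra_simps)

lemma form_diff_closed: "\<eta> \<in> \<Omega> \<Longrightarrow> \<eta>' \<in> \<Omega> \<Longrightarrow> (\<lambda>Z p. \<eta> Z p - \<eta>' Z p) \<in> \<Omega>"
  by (rule one_formsI) (simp_all add: smooth_diff form_smooth form_add form_smul form_non_vf algebra_simps)

lemma form_smul_closed: "h \<in> C \<Longrightarrow> \<eta> \<in> \<Omega> \<Longrightarrow> (\<lambda>Z p. h p * \<eta> Z p) \<in> \<Omega>"
  by (rule one_formsI) (simp_all add: smooth_mult form_smooth form_add form_smul form_non_vf algebra_simps)

lemma form_nabla_closed:
  assumes X: "X \<in> VF" and \<eta>: "\<eta> \<in> \<Omega>"
  shows "form_nabla A nb X \<eta> \<in> \<Omega>"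
proof (rule one_formsI)
  fix Y
  assume Y: "Y \<in> VF"
  then show "form_nabla A nb X \<eta> Y \<in> C"
    using X \<eta> by (simp add: form_nabla_def smooth_diff vf_smooth form_smooth connection_closed)
next
  fix Y Y'
  assume "Y \<in> VF" "Y' \<in> VF"
  then show "form_nabla A nb X \<eta> (vf_add Y Y') = (\<lambda>p. form_nabla A nb X \<eta> Y p + form_nabla A nb X \<eta> Y' p)"
    using X \<eta>
    by (simp add: form_nabla_def vf_add_closed form_add connection_add_right connection_closed
        vf_add_fun[OF X] form_smooth fun_eq_iff)
next
  fix f Y
  assume "f \<in> C" "Y \<in> VF"
  then show "form_nabla A nb X \<eta> (vf_smul f Y) = (\<lambda>p. f p * form_nabla A nb X \<eta> Y p)"
    using X \<eta>
    by (simp add: form_nabla_def vf_smul_closed form_smul form_add connection_smul_right connection_closed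
        vf_mult_fun[OF X] form_smooth vf_smooth fun_eq_iff algebra_simps)
qed (simp add: form_nabla_def)

lemma form_nabla_add_left:
  "X \<in> VF \<Longrightarrow> X' \<in> VF \<Longrightarrow> \<eta> \<in> \<Omega> \<Longrightarrow>
    form_nabla A nb (vf_add X X') \<eta> = (\<lambda>Z p. form_nabla A nb X \<eta> Z p + form_nabla A nb X' \<eta> Z p)"
  by (simp add: form_nabla_def fun_eq_iff connection_add_left form_add connection_closed vf_add_apply)

lemma form_nabla_add_right:
  "X \<in> VF \<Longrightarrow> \<eta> \<in> \<Omega> \<Longrightarrow> \<eta>' \<in> \<Omega> \<Longrightarrow>
    form_nabla A nb X (\<lambda>Z p. \<eta> Z p + \<eta>' Z p) = (\<lambda>Z p. form_nabla A nb X \<eta> Z p + form_nabla A nb X \<eta>' Z p)"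
  by (simp add: form_nabla_def fun_eq_iff vf_add_fun form_smooth)

lemma form_nabla_smul_left:
  "f \<in> C \<Longrightarrow> X \<in> VF \<Longrightarrow> \<eta> \<in> \<Omega> \<Longrightarrow>
    form_nabla A nb (vf_smul f X) \<eta> = (\<lambda>Z p. f p * form_nabla A nb X \<eta> Z p)"
  by (simp add: form_nabla_def fun_eq_iff connection_smul_left form_smul connection_closed vf_smul_apply
      right_diff_distrib)

lemma form_nabla_smul_right:
  "f \<in> C \<Longrightarrow> X \<in> VF \<Longrightarrow> \<eta> \<in> \<Omega> \<Longrightarrow>
    form_nabla A nb X (\<lambda>Z p. f p * \<eta> Z p) = (\<lambda>Z p. X f p * \<eta> Z p + f p * form_nabla A nb X \<eta> Z p)"
  by (simp add: form_nabla_def fun_eq_iff vf_mult_fun form_smooth form_non_vf algebra_simps)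

lemma lie_add_left: "X \<in> VF \<Longrightarrow> X' \<in> VF \<Longrightarrow> Y \<in> VF \<Longrightarrow> lie (vf_add X X') Y = vf_add (lie X Y) (lie X' Y)"
  by (simp add: lie_def vf_add_def fun_eq_iff vf_add_fun vf_smooth)

lemma lie_smul_right:
  "f \<in> C \<Longrightarrow> X \<in> VF \<Longrightarrow> Y \<in> VF \<Longrightarrow> lie X (vf_smul f Y) = vf_add (vf_smul (X f) Y) (vf_smul f (lie X Y))"
  by (simp add: lie_def vf_smul_def vf_add_def fun_eq_iff vf_mult_fun vf_smooth algebra_simps)

lemma sections_iff: "\<sigma> \<in> \<Gamma> \<longleftrightarrow> fst \<sigma> \<in> VF \<and> snd \<sigma> \<in> \<Omega>"
  by (cases \<sigma>) (simp add: sections_def)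

lemma sections_add_closed: "\<sigma> \<in> \<Gamma> \<Longrightarrow> \<tau> \<in> \<Gamma> \<Longrightarrow> \<sigma> + \<tau> \<in> \<Gamma>"
  unfolding sec_add_eq_plus[symmetric] by (simp add: sections_iff sec_add_def vf_add_closed form_add_closed)

lemma sections_smul_closed: "f \<in> C \<Longrightarrow> \<sigma> \<in> \<Gamma> \<Longrightarrow> sec_smul f \<sigma> \<in> \<Gamma>"
  by (simp add: sections_iff sec_smul_def vf_smul_closed form_smul_closed)

lemma sections_scaleR_closed: "\<sigma> \<in> \<Gamma> \<Longrightarrow> c *\<^sub>R \<sigma> \<in> \<Gamma>"
  using sections_smul_closed[OF smooth_const] by (simp add: sec_smul_const)

lemma nbracket_closed: "\<sigma> \<in> \<Gamma> \<Longrightarrow> \<tau> \<in> \<Gamma> \<Longrightarrow> nbracket A nb \<sigma> \<tau> \<in> \<Gamma>"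
  by (simp add: sections_iff nbracket_def lie_closed form_diff_closed form_nabla_closed)

lemma nbracket_add_left:
  "\<sigma> \<in> \<Gamma> \<Longrightarrow> \<sigma>' \<in> \<Gamma> \<Longrightarrow> \<tau> \<in> \<Gamma> \<Longrightarrow>
    nbracket A nb (sec_add \<sigma> \<sigma>') \<tau> = sec_add (nbracket A nb \<sigma> \<tau>) (nbracket A nb \<sigma>' \<tau>)"
  by (simp add: sections_iff nbracket_def sec_add_def lie_add_left form_nabla_add_left form_nabla_add_right
      fun_eq_iff)

lemma nbracket_smul_right:
  "\<sigma> \<in> \<Gamma> \<Longrightarrow> \<tau> \<in> \<Gamma> \<Longrightarrow> f \<in> C \<Longrightarrow>
    nbracket A nb \<sigma> (sec_smul f \<tau>) = sec_add (sec_smul (fst \<sigma> f) \<tau>) (sec_smul f (nbracket A nb \<sigma> \<tau>))"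
  by (simp add: sections_iff nbracket_def sec_add_def sec_smul_def lie_smul_right form_nabla_smul_left
      form_nabla_smul_right fun_eq_iff algebra_simps)

lemma nbracket_antisym: "nbracket A nb \<sigma> \<tau> = - nbracket A nb \<tau> \<sigma>"
  by (simp add: nbracket_def lie_def prod_eq_iff fun_eq_iff)

lemma nbracket_scaleR_left:
  assumes "\<sigma> \<in> \<Gamma>" "\<tau> \<in> \<Gamma>"
  shows "nbracket A nb (c *\<^sub>R \<sigma>) \<tau> = c *\<^sub>R nbracket A nb \<sigma> \<tau>"
proof -
  have "nbracket A nb \<tau> (sec_smul (\<lambda>p. c) \<sigma>)
      = sec_add (sec_smul (\<lambda>p. 0) \<sigma>) (sec_smul (\<lambda>p. c) (nbracket A nb \<tau> \<sigma>))"
    using assms nbracket_smul_right[OF assms(2,1) smooth_const] by (simp add: sections_iff vf_const)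
  then show ?thesis
    by (simp add: nbracket_antisym[of "c *\<^sub>R \<sigma>"] nbracket_antisym[of \<tau> \<sigma>] sec_smul_const sec_add_eq_plus)
qed

end

section \<open>The canonical connection\<close>

locale generalized_quaternionic_manifold = manifold_with_connection A nb
  for A :: "('m set \<times> ('m \<Rightarrow> 'e::euclidean_space)) set" and nb +
  fixes J1 J2 :: "'m sec \<Rightarrow> 'm sec"
  assumes quaternionic: "gen_quaternionic A nb J1 J2"
begin

lemma endo_closed: "gen_endo A K \<Longrightarrow> \<sigma> \<in> \<Gamma> \<Longrightarrow> K \<sigma> \<in> \<Gamma>"
  and endo_add: "gen_endo A K \<Longrightarrow> \<sigma> \<in> \<Gamma> \<Longrightarrow> \<tau> \<in> \<Gamma> \<Longrightarrow> K (\<sigma> + \<tau>) = K \<sigma> + K \<tau>"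
  and endo_smul: "gen_endo A K \<Longrightarrow> f \<in> C \<Longrightarrow> \<sigma> \<in> \<Gamma> \<Longrightarrow> K (sec_smul f \<sigma>) = sec_smul f (K \<sigma>)"
  unfolding gen_endo_def sec_add_eq_plus by blast+

lemma endo_scaleR: "gen_endo A K \<Longrightarrow> \<sigma> \<in> \<Gamma> \<Longrightarrow> K (c *\<^sub>R \<sigma>) = c *\<^sub>R K \<sigma>"
  using endo_smul[OF _ smooth_const] by (simp add: sec_smul_const)

lemma J1_endo: "gen_endo A J1" and J2_endo: "gen_endo A J2"
  using quaternionic by (simp_all add: gen_quaternionic_def)

sublocale quaternionic_algebroid \<Gamma> J1 J2 "nbracket A nb" C sec_smul "\<lambda>\<sigma> f. fst \<sigma> f"
proof
  show "J1 (J1 \<sigma>) = - \<sigma>" "J2 (J2 \<sigma>) = - \<sigma>" "J1 (J2 \<sigma>) = - J2 (J1 \<sigma>)" if "\<sigma> \<in> \<Gamma>" for \<sigma>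
    using quaternionic that by (simp_all add: gen_quaternionic_def sec_neg_eq_uminus)
  show "nijenhuis_tensor (nbracket A nb) J1 \<sigma> \<tau> = 0" "nijenhuis_tensor (nbracket A nb) J2 \<sigma> \<tau> = 0"
    "nijenhuis_tensor (nbracket A nb) (\<lambda>z. J1 (J2 z)) \<sigma> \<tau> = 0" if "\<sigma> \<in> \<Gamma>" "\<tau> \<in> \<Gamma>" for \<sigma> \<tau>
    using quaternionic that
    by (simp_all add: gen_quaternionic_def nabla_integrable_def nijenhuis_eq_nijenhuis_tensor[symmetric]
        sec_zero_eq_zero comp_def)
  show "nbracket A nb \<sigma> \<tau> = - nbracket A nb \<tau> \<sigma>" for \<sigma> \<tau>
    by (rule nbracket_antisym)
  show "nbracket A nb (\<sigma> + \<sigma>') \<tau> = nbracket A nb \<sigma> \<tau> + nbracket A nb \<sigma>' \<tau>"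
    if "\<sigma> \<in> \<Gamma>" "\<sigma>' \<in> \<Gamma>" "\<tau> \<in> \<Gamma>" for \<sigma> \<sigma>' \<tau>
    using nbracket_add_left[OF that] by (simp add: sec_add_eq_plus)
  show "nbracket A nb \<sigma> (sec_smul f \<tau>) = sec_smul (fst \<sigma> f) \<tau> + sec_smul f (nbracket A nb \<sigma> \<tau>)"
    if "\<sigma> \<in> \<Gamma>" "\<tau> \<in> \<Gamma>" "f \<in> C" for \<sigma> \<tau> f
    using nbracket_smul_right[OF that] by (simp add: sec_add_eq_plus)
  show "fst \<sigma> f \<in> C" if "\<sigma> \<in> \<Gamma>" for \<sigma> f
    using that by (simp add: sections_iff vf_smooth)
qed (simp_all add: sections_add_closed sections_scaleR_closed sections_smul_closed nbracket_closed
    nbracket_scaleR_left endo_closed endo_add endo_scaleR endo_smul J1_endo J2_endo sec_smul_add sec_smul_scaleR)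

lemma obata_eq_obata_conn: "\<sigma> \<in> \<Gamma> \<Longrightarrow> \<tau> \<in> \<Gamma> \<Longrightarrow> obata A nb J1 J2 \<sigma> \<tau> = obata_conn \<sigma> \<tau>"
  by (simp add: obata_def Let_def obata_conn_def obata_term_def qact.simps nijenhuis_eq_nijenhuis_tensor sec_ops_eq
      J1_integrable J2_integrable J1J2_integrable comp_def)

lemma obata_is_canonical: "is_canonical_connection A nb J1 J2 (obata A nb J1 J2)"
proof -
  have "gen_affine_connection A (obata A nb J1 J2)"
    unfolding gen_affine_connection_def
    by (simp add: obata_eq_obata_conn obata_conn_closed sec_add_eq_plus add_closed smul_closed anchor_closed
        obata_conn_add_left obata_conn_add_right obata_conn_smul_left obata_conn_smul_right)
  moreover have "\<forall>K\<in>{J1, J2, J1 \<circ> J2}. \<forall>\<sigma>\<in>\<Gamma>. \<forall>\<tau>\<in>\<Gamma>. obata A nb J1 J2 \<sigma> (K \<tau>) = K (obata A nb J1 J2 \<sigma> \<tau>)"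
    by (simp add: obata_eq_obata_conn J1_closed J2_closed obata_conn_J1_right obata_conn_J2_right)
  moreover have "csub (csub (cext (obata A nb J1 J2) s t) (cext (obata A nb J1 J2) t s)) (cext (nbracket A nb) s t)
      = (sec_zero, sec_zero)" if "s = (\<sigma>, sec_neg (J1 \<sigma>))" "t = (\<tau>, J1 \<tau>)" "\<sigma> \<in> \<Gamma>" "\<tau> \<in> \<Gamma>" for s t \<sigma> \<tau>
    using that
    by (intro cext_torsion_eq_0[where P = \<Gamma>]) (simp_all add: obata_eq_obata_conn obata_conn_torsion_free
        sec_neg_eq_uminus uminus_closed J1_closed)
  ultimately show ?thesis
    unfolding is_canonical_connection_def Let_def by blast
qed

lemma canonical_connection_eq_obata:
  assumes D: "is_canonical_connection A nb J1 J2 D" and \<sigma>: "\<sigma> \<in> \<Gamma>" and \<tau>: "\<tau> \<in> \<Gamma>"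
  shows "D \<sigma> \<tau> = obata A nb J1 J2 \<sigma> \<tau>"
proof -
  have affine: "gen_affine_connection A D"
    and compat: "\<forall>K\<in>{J1, J2, J1 \<circ> J2}. \<forall>\<sigma>\<in>\<Gamma>. \<forall>\<tau>\<in>\<Gamma>. D \<sigma> (K \<tau>) = K (D \<sigma> \<tau>)"
    and torsion: "\<forall>\<sigma>\<in>\<Gamma>. \<forall>\<tau>\<in>\<Gamma>. let s = (\<sigma>, sec_neg (J1 \<sigma>)); t = (\<tau>, J1 \<tau>) in
      csub (csub (cext D s t) (cext D t s)) (cext (nbracket A nb) s t) = (sec_zero, sec_zero)"
    using D unfolding is_canonical_connection_def by blast+
  have closed: "D a b \<in> \<Gamma>" if "a \<in> \<Gamma>" "b \<in> \<Gamma>" for a b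
    using affine that unfolding gen_affine_connection_def by blast
  have uminus_left: "D (- a) b = - D a b" if "a \<in> \<Gamma>" "b \<in> \<Gamma>" for a b
  proof -
    have "D (sec_smul (\<lambda>p. - 1) a) b = sec_smul (\<lambda>p. - 1) (D a b)"
      using affine that smooth_const unfolding gen_affine_connection_def by blast
    then show ?thesis
      by (simp add: sec_smul_const)
  qed
  have uminus_right: "D a (- b) = - D a b" if "a \<in> \<Gamma>" "b \<in> \<Gamma>" for a b
  proof -
    have "D a (J1 (J1 b)) = J1 (J1 (D a b))"
      using compat that by (simp add: J1_closed)
    then show ?thesis
      using that by (simp add: J1_J1 closed)
  qed
  have skew: "D a b + D (J1 a) (J1 b) - nbracket A nb a b - nbracket A nb (J1 a) (J1 b)
      = D b a + D (J1 b) (J1 a)" if "a \<in> \<Gamma>" "b \<in> \<Gamma>" for a b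
    using torsion that unfolding Let_def
    by (simp add: cext_def csub_def sec_ops_eq prod_eq_iff uminus_left uminus_right br_uminus_left J1_closed algebra_simps)
  have "D \<sigma> \<tau> - obata_conn \<sigma> \<tau> = 0"
  proof (rule J_linear_tensor_eq_0[OF _ _ _ _ _ \<sigma> \<tau>])
    fix a b
    assume a: "a \<in> \<Gamma>" and b: "b \<in> \<Gamma>"
    show "D a b - obata_conn a b \<in> \<Gamma>"
      using a b by (simp add: closed obata_conn_closed diff_closed)
    show "D a (J1 b) - obata_conn a (J1 b) = J1 (D a b - obata_conn a b)"
      using a b compat by (simp add: obata_conn_J1_right J1_diff closed obata_conn_closed)
    show "D a (J2 b) - obata_conn a (J2 b) = J2 (D a b - obata_conn a b)"
      using a b compat by (simp add: obata_conn_J2_right J2_diff closed obata_conn_closed)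
    show "D (- a) b - obata_conn (- a) b = - (D a b - obata_conn a b)"
      using a b by (simp add: uminus_left obata_conn_uminus_left)
    show "D a b - obata_conn a b + (D (J1 a) (J1 b) - obata_conn (J1 a) (J1 b))
        = D b a - obata_conn b a + (D (J1 b) (J1 a) - obata_conn (J1 b) (J1 a))"
      using skew[OF a b] obata_conn_torsion_free[of a b] obata_conn_torsion_free[of "J1 a" "J1 b"]
      by (simp add: algebra_simps)
  qed
  then show ?thesis
    using \<sigma> \<tau> by (simp add: obata_eq_obata_conn)
qed

end

theorem proposition5p13:
  fixes A :: "('m set \<times> ('m \<Rightarrow> 'e::euclidean_space)) set"
    and nb :: "'m vf \<Rightarrow> 'm vf \<Rightarrow> 'm vf"
    and J1 J2 :: "'m sec \<Rightarrow> 'm sec"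
  assumes "smooth_manifold A"
    and "affine_connection A nb"
    and "gen_quaternionic A nb J1 J2"
  shows "is_canonical_connection A nb J1 J2 (obata A nb J1 J2) \<and>
         (\<forall>D. is_canonical_connection A nb J1 J2 D \<longrightarrow>
            (\<forall>\<sigma>\<in>sections A. \<forall>\<tau>\<in>sections A. D \<sigma> \<tau> = obata A nb J1 J2 \<sigma> \<tau>))"
proof -
  interpret generalized_quaternionic_manifold A nb J1 J2
    using assms by unfold_locales
  show ?thesis
    using obata_is_canonical canonical_connection_eq_obata by blast
qed

end
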